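(* Let $X$ be a Banach lattice with order continuous norm, let $(S_\lambda)_{\lambda\in\Lambda}$ be a family of convex monotone semigroups on $X$, and suppose $S$ is the semigroup envelope of $(S_\lambda)_{\lambda\in\Lambda}$. Then $S(t)x=\sup_{\pi\in P_t}J_\pi x$ for all $t\ge0$ and $x\in X$.
   Context: A Banach lattice $X$ has order continuous norm if $\|x_\alpha\|\to 0$ for every net $x_\alpha\downarrow 0$ (then every nonempty subset bounded above has a supremum). An operator $T\colon X\to X$ is convex if $T(\lambda x+(1-\lambda)y)\le\lambda Tx+(1-\lambda)Ty$, monotone if $x\le y\Rightarrow Tx\le Ty$, bounded if $\sup_{\|x\|\le r}\|Tx\|<\infty$ for all $r>0$. A semigroup on $X$ is a family $(S(t))_{t\ge0}$ of bounded operators $X\to X$ with $S(0)=\mathrm{id}$ and $S(t+s)=S(t)S(s)$; convex/monotone if every $S(t)$ is. For semigroups $S,T$ write $S\le T$ if $S(t)x\le T(t)x$ for all $t,x$. A semigroup is an upper bound of $(S_\lambda)$ if it dominates every $S_\lambda$; the (upper) semigroup envelope is the smallest upper bound. Let $P$ be the set of finite $\pi\subset[0,\infty)$ with $0\in\pi$, $P_t:=\{\pi\in P:\max\pi=t\}$. Define $J_hx:=\sup_{\lambda\in\Lambda}S_\lambda(h)x$ for $h>0$ ($J_0=\mathrm{id}$) and for $\pi=\{t_0<\dots<t_m\}$, $t_0=0$, $J_\pi:=J_{t_1-t_0}\cdots J_{t_m-t_{m-1}}$. *)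

theory Defs
  imports "HOL-Analysis.Analysis"
begin

text \<open>Real Banach lattices are modelled as types of sort
  banach + ordered_real_vector + lattice (a complete normed real vector space
  which is an ordered vector space whose order is a lattice order), together
  with the lattice-norm condition below.\<close>

definition lat_abs :: "'a::{ordered_real_vector, lattice} \<Rightarrow> 'a" where
  "lat_abs x = sup x (- x)"

definition banach_lattice :: "'a::{banach, ordered_real_vector, lattice} itself \<Rightarrow> bool" where
  "banach_lattice _ \<longleftrightarrow> (\<forall>x y :: 'a. lat_abs x \<le> lat_abs y \<longrightarrow> norm x \<le> norm y)"

definition is_lub :: "'a::order set \<Rightarrow> 'a \<Rightarrow> bool" where
  "is_lub A s \<longleftrightarrow> (\<forall>a\<in>A. a \<le> s) \<and> (\<forall>u. (\<forall>a\<in>A. a \<le> u) \<longrightarrow> s \<le> u)"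

definition is_glb :: "'a::order set \<Rightarrow> 'a \<Rightarrow> bool" where
  "is_glb A s \<longleftrightarrow> (\<forall>a\<in>A. s \<le> a) \<and> (\<forall>u. (\<forall>a\<in>A. u \<le> a) \<longrightarrow> u \<le> s)"

definition lub :: "'a::order set \<Rightarrow> 'a" where
  "lub A = (THE s. is_lub A s)"

text \<open>Order continuous norm: every downward directed net decreasing to 0
  has norms tending to 0. A net x_alpha decreasing to 0 is represented by its
  (downward directed) set of values A with infimum 0; norm convergence along the
  net is then: for every eps > 0 some element of A has norm < eps (and then all
  smaller ones do as well, by the lattice norm property).\<close>
definition down_directed :: "'a::order set \<Rightarrow> bool" where
  "down_directed A \<longleftrightarrow> A \<noteq> {} \<and> (\<forall>a\<in>A. \<forall>b\<in>A. \<exists>c\<in>A. c \<le> a \<and> c \<le> b)"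

definition order_continuous_norm :: "'a::{banach, ordered_real_vector, lattice} itself \<Rightarrow> bool" where
  "order_continuous_norm _ \<longleftrightarrow>
     (\<forall>A :: 'a set. down_directed A \<and> is_glb A 0 \<longrightarrow>
        (\<forall>e>0. \<exists>a\<in>A. \<forall>b\<in>A. b \<le> a \<longrightarrow> norm b < e))"

definition bounded_op :: "('a::real_normed_vector \<Rightarrow> 'a) \<Rightarrow> bool" where
  "bounded_op T \<longleftrightarrow> (\<forall>r>0. \<exists>C. \<forall>x. norm x \<le> r \<longrightarrow> norm (T x) \<le> C)"

definition convex_op :: "('a::ordered_real_vector \<Rightarrow> 'a) \<Rightarrow> bool" where
  "convex_op T \<longleftrightarrow> (\<forall>x y. \<forall>l::real. 0 \<le> l \<and> l \<le> 1 \<longrightarrow>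
      T (l *\<^sub>R x + (1 - l) *\<^sub>R y) \<le> l *\<^sub>R T x + (1 - l) *\<^sub>R T y)"

definition monotone_op :: "('a::order \<Rightarrow> 'a) \<Rightarrow> bool" where
  "monotone_op T \<longleftrightarrow> (\<forall>x y. x \<le> y \<longrightarrow> T x \<le> T y)"

definition semigroup :: "(real \<Rightarrow> 'a::real_normed_vector \<Rightarrow> 'a) \<Rightarrow> bool" where
  "semigroup S \<longleftrightarrow> (\<forall>t\<ge>0. bounded_op (S t)) \<and> S 0 = id \<and>
     (\<forall>t\<ge>0. \<forall>s\<ge>0. S (t + s) = S t \<circ> S s)"

definition convex_monotone_semigroup ::
  "(real \<Rightarrow> 'a::{real_normed_vector, ordered_real_vector} \<Rightarrow> 'a) \<Rightarrow> bool" where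
  "convex_monotone_semigroup S \<longleftrightarrow> semigroup S \<and>
     (\<forall>t\<ge>0. convex_op (S t) \<and> monotone_op (S t))"

definition sg_le :: "(real \<Rightarrow> 'a::order \<Rightarrow> 'a) \<Rightarrow> (real \<Rightarrow> 'a \<Rightarrow> 'a) \<Rightarrow> bool" where
  "sg_le S T \<longleftrightarrow> (\<forall>t\<ge>0. \<forall>x. S t x \<le> T t x)"

definition upper_bound_sg ::
  "'l set \<Rightarrow> ('l \<Rightarrow> real \<Rightarrow> 'a::{real_normed_vector, order} \<Rightarrow> 'a) \<Rightarrow> (real \<Rightarrow> 'a \<Rightarrow> 'a) \<Rightarrow> bool" where
  "upper_bound_sg L Ss T \<longleftrightarrow> semigroup T \<and> (\<forall>l\<in>L. sg_le (Ss l) T)"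

definition semigroup_envelope ::
  "'l set \<Rightarrow> ('l \<Rightarrow> real \<Rightarrow> 'a::{real_normed_vector, order} \<Rightarrow> 'a) \<Rightarrow> (real \<Rightarrow> 'a \<Rightarrow> 'a) \<Rightarrow> bool" where
  "semigroup_envelope L Ss S \<longleftrightarrow> upper_bound_sg L Ss S \<and>
     (\<forall>T. upper_bound_sg L Ss T \<longrightarrow> sg_le S T)"

definition partitions :: "real \<Rightarrow> real set set" where
  "partitions t = {p. finite p \<and> p \<subseteq> {0..} \<and> 0 \<in> p \<and> Max p = t}"

definition J_step :: "'l set \<Rightarrow> ('l \<Rightarrow> real \<Rightarrow> 'a::order \<Rightarrow> 'a) \<Rightarrow> real \<Rightarrow> 'a \<Rightarrow> 'a" where
  "J_step L Ss h = (if h = 0 then id else (\<lambda>x. lub {Ss l h x | l. l \<in> L}))"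

fun J_list :: "'l set \<Rightarrow> ('l \<Rightarrow> real \<Rightarrow> 'a::order \<Rightarrow> 'a) \<Rightarrow> real list \<Rightarrow> 'a \<Rightarrow> 'a" where
  "J_list L Ss (a # b # rest) = J_step L Ss (b - a) \<circ> J_list L Ss (b # rest)"
| "J_list L Ss _ = id"

definition J_part :: "'l set \<Rightarrow> ('l \<Rightarrow> real \<Rightarrow> 'a::order \<Rightarrow> 'a) \<Rightarrow> real set \<Rightarrow> 'a \<Rightarrow> 'a" where
  "J_part L Ss p = J_list L Ss (sorted_list_of_set p)"

end

theory Submission
  imports Defs
begin

(* In an order continuous Banach lattice every nonempty order bounded set has a supremum:
   for an upward directed set A the gaps v - a between upper bounds v and elements a
   decrease to 0 by the Archimedean property, so order continuity makes A norm Cauchy, and its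
   limit is the supremum because the positive cone is closed. A convex monotone bounded
   operator T preserves suprema of directed sets, since convexity bounds T s - T a linearly
   in the distance from a to s.

   Hence J_h x and Jsup t x = sup {J_p x | p partition of [0, t]} exist, bounded by S(t) x.
   Refining a partition increases J_p because J_(a+b) <= J_a J_b, so these values form a
   directed set. This gives Jsup (t + s) = Jsup t o Jsup s: one inequality by adding t to a
   partition of [0, t + s] and splitting it there, the other by pushing the directed supremum
   defining Jsup s through the order continuous J_p. So Jsup is a semigroup with
   S_lambda <= Jsup <= S, and minimality of the envelope forces S = Jsup. *)

section \<open>Norm inequalities in Banach lattices\<close>

lemma lat_abs_ge: "x \<le> lat_abs x" "- x \<le> lat_abs x"
  by (auto simp: lat_abs_def)

lemma lat_abs_nonneg: "0 \<le> lat_abs (x::'a::{ordered_real_vector, lattice})"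
proof -
  have "x + - x \<le> lat_abs x + lat_abs x"
    by (rule add_mono[OF lat_abs_ge])
  then have "0 \<le> lat_abs x + lat_abs x"
    by simp
  then have "0 \<le> (1/2::real) *\<^sub>R (lat_abs x + lat_abs x)"
    by (intro scaleR_nonneg_nonneg) auto
  then show ?thesis by (metis scaleR_half_double)
qed

lemma lat_abs_of_nonneg: "0 \<le> (x::'a::{ordered_real_vector, lattice}) \<Longrightarrow> lat_abs x = x"
  unfolding lat_abs_def by (rule sup_absorb1) (meson order_trans neg_le_0_iff_le)

lemma norm_lat_abs:
  assumes "banach_lattice TYPE('a::{banach, ordered_real_vector, lattice})"
  shows "norm (lat_abs (x::'a)) = norm x"
  using assms lat_abs_of_nonneg[OF lat_abs_nonneg, of x]
  unfolding banach_lattice_def by (metis order_refl antisym)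

lemma norm_le_if_lat_abs_le:
  assumes "banach_lattice TYPE('a::{banach, ordered_real_vector, lattice})"
    and "0 \<le> y" "lat_abs x \<le> (y::'a)"
  shows "norm x \<le> norm y"
  using assms unfolding banach_lattice_def by (metis lat_abs_of_nonneg)

lemma norm_mono_nonneg:
  assumes "banach_lattice TYPE('a::{banach, ordered_real_vector, lattice})"
    and "0 \<le> x" "x \<le> (y::'a)"
  shows "norm x \<le> norm y"
  using assms norm_le_if_lat_abs_le[OF assms(1)] by (metis lat_abs_of_nonneg order_trans)

lemma norm_le_norm_add_if_between:
  assumes "banach_lattice TYPE('a::{banach, ordered_real_vector, lattice})"
    and "x \<le> m" "m \<le> (y::'a)"
  shows "norm m \<le> norm x + norm y"
proof -
  have "m \<le> lat_abs x + lat_abs y"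
    by (metis add.commute add_increasing assms(3) lat_abs_ge(1) lat_abs_nonneg order_trans)
  moreover have "- m \<le> lat_abs x + lat_abs y"
    by (meson add_increasing2 assms(2) lat_abs_ge(2) lat_abs_nonneg neg_le_iff_le order_trans)
  ultimately have "lat_abs m \<le> lat_abs x + lat_abs y"
    by (simp add: lat_abs_def)
  then have "norm m \<le> norm (lat_abs x + lat_abs y)"
    by (rule norm_le_if_lat_abs_le[OF assms(1) add_nonneg_nonneg[OF lat_abs_nonneg lat_abs_nonneg]])
  also have "\<dots> \<le> norm x + norm y"
    using norm_triangle_ineq norm_lat_abs[OF assms(1)] by metis
  finally show ?thesis .
qed

lemma archimedean_lattice:
  assumes "banach_lattice TYPE('a::{banach, ordered_real_vector, lattice})"
    and "0 \<le> w" "\<And>n::nat. real n *\<^sub>R w \<le> (c::'a)"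
  shows "w = 0"
proof -
  have "real n * norm w \<le> norm (lat_abs c)" for n
    using norm_mono_nonneg[OF assms(1) _ order_trans[OF assms(3) lat_abs_ge(1)]] assms(2)
    by (simp add: scaleR_nonneg_nonneg)
  then show ?thesis
    by (metis linorder_not_le norm_le_zero_iff reals_Archimedean3)
qed

lemma LIMSEQ_le_lattice:
  assumes "banach_lattice TYPE('a::{banach, ordered_real_vector, lattice})"
    and "\<And>n. f n \<le> g n" "f \<longlonglongrightarrow> x" "g \<longlonglongrightarrow> (y::'a)"
  shows "x \<le> y"
proof -
  define neg where "neg = sup (x - y) 0"
  have "norm neg \<le> norm ((g n - f n) - (y - x))" for n
  proof -
    have "x - y \<le> (x - y) + (g n - f n)"
      using assms(2)[of n] by simp
    also have "\<dots> = (g n - f n) - (y - x)"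
      by (simp add: algebra_simps)
    finally have "x - y \<le> (g n - f n) - (y - x)" .
    then have "x - y \<le> lat_abs ((g n - f n) - (y - x))"
      using lat_abs_ge(1) order_trans by blast
    then have "neg \<le> lat_abs ((g n - f n) - (y - x))"
      by (simp add: neg_def lat_abs_nonneg)
    then show ?thesis
      using norm_mono_nonneg[OF assms(1)] norm_lat_abs[OF assms(1)] by (metis neg_def sup.cobounded2)
  qed
  moreover have "(\<lambda>n. norm ((g n - f n) - (y - x))) \<longlonglongrightarrow> 0"
    using tendsto_diff[OF assms(4,3)] by (simp add: LIM_zero tendsto_norm_zero)
  ultimately have "norm neg \<le> 0"
    by (meson LIMSEQ_le_const)
  then have "neg = 0"
    by simp
  then show ?thesis
    by (metis neg_def sup.cobounded1 diff_le_0_iff_le)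
qed

section \<open>Dedekind completeness of order continuous Banach lattices\<close>

definition up_directed :: "'a::order set \<Rightarrow> bool" where
  "up_directed A \<longleftrightarrow> A \<noteq> {} \<and> (\<forall>a\<in>A. \<forall>b\<in>A. \<exists>c\<in>A. a \<le> c \<and> b \<le> c)"

lemma up_directed_image:
  assumes "up_directed A" "\<And>x y. x \<le> y \<Longrightarrow> f x \<le> f y"
  shows "up_directed (f ` A)"
  unfolding up_directed_def
proof (intro conjI ballI)
  show "f ` A \<noteq> {}"
    using assms(1) by (simp add: up_directed_def)
next
  fix x y assume "x \<in> f ` A" "y \<in> f ` A"
  then obtain a b where ab: "a \<in> A" "b \<in> A" "x = f a" "y = f b"
    by blast
  moreover obtain c where "c \<in> A" "a \<le> c" "b \<le> c"
    using assms(1) ab unfolding up_directed_def by blast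
  ultimately show "\<exists>z\<in>f ` A. x \<le> z \<and> y \<le> z"
    using assms(2) by blast
qed

lemma is_lub_unique: "is_lub A s \<Longrightarrow> is_lub A s' \<Longrightarrow> s = (s'::'a::order)"
  unfolding is_lub_def by (meson antisym)

lemma lub_eqI: "is_lub A s \<Longrightarrow> lub A = s"
  unfolding lub_def by (rule the_equality) (auto intro: is_lub_unique)

definition upper_bound_gaps :: "'a::{order, minus} set \<Rightarrow> 'a set" where
  "upper_bound_gaps A = {v - a | v a. (\<forall>b\<in>A. b \<le> v) \<and> a \<in> A}"

lemma is_glb_upper_bound_gaps:
  assumes bl: "banach_lattice TYPE('a::{banach, ordered_real_vector, lattice})"
    and "a0 \<in> A" "\<forall>a\<in>A. a \<le> (u::'a)"
  shows "is_glb (upper_bound_gaps A) 0"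
  unfolding is_glb_def upper_bound_gaps_def
proof (intro conjI allI impI ballI)
  fix d assume "d \<in> {v - a | v a. (\<forall>b\<in>A. b \<le> v) \<and> a \<in> A}"
  then show "0 \<le> d" by auto
next
  fix w assume w: "\<forall>d \<in> {v - a | v a. (\<forall>b\<in>A. b \<le> v) \<and> a \<in> A}. w \<le> d"
  define w' where "w' = sup w 0"
  have shift: "\<forall>a\<in>A. a \<le> v - w'" if "\<forall>b\<in>A. b \<le> v" for v
  proof
    fix a assume "a \<in> A"
    then have "w' \<le> v - a"
      using w that by (auto simp: w'_def)
    then show "a \<le> v - w'"
      by (simp add: le_diff_eq add.commute)
  qed
  have "\<forall>a\<in>A. a \<le> u - real n *\<^sub>R w'" for n
  proof (induction n)
    case (Suc n)
    then show ?case
      using shift[OF Suc] by (simp add: algebra_simps)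
  qed (use assms in simp)
  then have "real n *\<^sub>R w' \<le> u - a0" for n
    using assms(2) by (simp add: le_diff_eq add.commute)
  then have "w' = 0"
    by (intro archimedean_lattice[OF bl, of w' "u - a0"]) (auto simp: w'_def)
  then show "w \<le> 0"
    by (metis w'_def sup.cobounded1)
qed

lemma down_directed_upper_bound_gaps:
  assumes "up_directed A" "\<forall>a\<in>A. a \<le> (u::'a::{ordered_ab_group_add, lattice})"
  shows "down_directed (upper_bound_gaps A)"
  unfolding down_directed_def
proof (intro conjI ballI)
  show "upper_bound_gaps A \<noteq> {}"
    using assms unfolding up_directed_def upper_bound_gaps_def by blast
next
  fix d1 d2 assume "d1 \<in> upper_bound_gaps A" "d2 \<in> upper_bound_gaps A"
  then obtain v1 a1 v2 a2 where d: "d1 = v1 - a1" "d2 = v2 - a2" "a1 \<in> A" "a2 \<in> A"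
    and v: "\<forall>b\<in>A. b \<le> v1" "\<forall>b\<in>A. b \<le> v2"
    unfolding upper_bound_gaps_def by blast
  obtain a3 where a3: "a3 \<in> A" "a1 \<le> a3" "a2 \<le> a3"
    using assms(1) d unfolding up_directed_def by blast
  have "\<forall>b\<in>A. b \<le> inf v1 v2"
    using v by simp
  then have "inf v1 v2 - a3 \<in> upper_bound_gaps A"
    using a3 unfolding upper_bound_gaps_def by blast
  moreover have "inf v1 v2 - a3 \<le> d1" "inf v1 v2 - a3 \<le> d2"
    using d a3 by (auto intro: diff_mono)
  ultimately show "\<exists>c\<in>upper_bound_gaps A. c \<le> d1 \<and> c \<le> d2"
    by blast
qed

lemma up_directed_tails_small:
  assumes bl: "banach_lattice TYPE('a::{banach, ordered_real_vector, lattice})"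
    and oc: "order_continuous_norm TYPE('a)"
    and dir: "up_directed A" and bounded: "\<forall>a\<in>A. a \<le> (u::'a)" and "e > 0"
  shows "\<exists>a0\<in>A. \<forall>a\<in>A. a0 \<le> a \<longrightarrow> norm (a - a0) < e"
proof -
  have "is_glb (upper_bound_gaps A) 0"
    using dir is_glb_upper_bound_gaps[OF bl _ bounded] unfolding up_directed_def by blast
  then obtain d where "d \<in> upper_bound_gaps A" "norm d < e"
    using oc down_directed_upper_bound_gaps[OF dir bounded] \<open>e > 0\<close>
    unfolding order_continuous_norm_def by blast
  then obtain v a0 where v: "\<forall>b\<in>A. b \<le> v" and "a0 \<in> A" and small: "norm (v - a0) < e"
    unfolding upper_bound_gaps_def by blast
  have "norm (a - a0) < e" if "a \<in> A" "a0 \<le> a" for a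
  proof -
    have "norm (a - a0) \<le> norm (v - a0)"
      using that v by (intro norm_mono_nonneg[OF bl]) (auto intro: diff_right_mono)
    then show ?thesis
      using small by simp
  qed
  then show ?thesis
    using \<open>a0 \<in> A\<close> by blast
qed

lemma up_directed_ex_is_lub_if_tails_small:
  assumes bl: "banach_lattice TYPE('a::{banach, ordered_real_vector, lattice})"
    and dir: "up_directed (A::'a set)"
    and tails: "\<And>e. e > 0 \<Longrightarrow> \<exists>a0\<in>A. \<forall>a\<in>A. a0 \<le> a \<longrightarrow> norm (a - a0) < e"
  shows "\<exists>s. is_lub A s"
proof -
  obtain c where c: "\<And>n. c n \<in> A"
    and c_tail: "\<And>n a. a \<in> A \<Longrightarrow> c n \<le> a \<Longrightarrow> norm (a - c n) < inverse (real (Suc n))"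
    using tails[of "inverse (real (Suc _))"] by (metis inverse_positive_iff_positive of_nat_0_less_iff zero_less_Suc)
  have "Cauchy c"
  proof (rule metric_CauchyI)
    fix e :: real assume "0 < e"
    then obtain M where M: "inverse (real (Suc M)) < e / 2"
      using reals_Archimedean half_gt_zero by blast
    have "dist (c m) (c n) < e" if "M \<le> m" "M \<le> n" for m n
    proof -
      obtain a where a: "a \<in> A" "c m \<le> a" "c n \<le> a"
        using dir c unfolding up_directed_def by meson
      have "dist (c m) (c n) \<le> norm (a - c m) + norm (a - c n)"
        by (metis dist_norm dist_triangle2 dist_commute)
      also have "\<dots> < inverse (real (Suc m)) + inverse (real (Suc n))"
        using c_tail a by (simp add: add_strict_mono)
      also have "\<dots> \<le> inverse (real (Suc M)) + inverse (real (Suc M))"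
        using that by (intro add_mono le_imp_inverse_le) auto
      finally show ?thesis
        using M by linarith
    qed
    then show "\<exists>M. \<forall>m\<ge>M. \<forall>n\<ge>M. dist (c m) (c n) < e"
      by blast
  qed
  then obtain s where s: "c \<longlonglongrightarrow> s"
    using Cauchy_convergent_iff convergent_def by blast
  have "is_lub A s"
    unfolding is_lub_def
  proof (intro conjI ballI allI impI)
    fix a assume "a \<in> A"
    then have "\<forall>n. \<exists>b\<in>A. a \<le> b \<and> c n \<le> b"
      using dir c unfolding up_directed_def by blast
    then obtain b where b: "\<And>n. b n \<in> A" "\<And>n. a \<le> b n" "\<And>n. c n \<le> b n"
      by metis
    have "(\<lambda>n. b n - c n) \<longlonglongrightarrow> 0"
      by (rule Lim_null_comparison[OF always_eventually LIMSEQ_inverse_real_of_nat])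
        (use c_tail b in \<open>blast intro: less_imp_le\<close>)
    then have "b \<longlonglongrightarrow> s"
      using tendsto_add[OF _ s] by fastforce
    then show "a \<le> s"
      by (rule LIMSEQ_le_lattice[OF bl b(2) tendsto_const])
  next
    fix w assume "\<forall>a\<in>A. a \<le> w"
    then show "s \<le> w"
      using LIMSEQ_le_lattice[OF bl _ s tendsto_const] c by blast
  qed
  then show ?thesis ..
qed

lemma ex_is_lub:
  assumes bl: "banach_lattice TYPE('a::{banach, ordered_real_vector, lattice})"
    and oc: "order_continuous_norm TYPE('a)"
    and "(A::'a set) \<noteq> {}" "\<forall>a\<in>A. a \<le> u"
  shows "\<exists>s. is_lub A s"
proof -
  define A' where "A' = {Sup_fin F | F. finite F \<and> F \<noteq> {} \<and> F \<subseteq> A}"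
  have singleton: "a \<in> A'" if "a \<in> A" for a
    using that unfolding A'_def by (auto intro!: exI[of _ "{a}"])
  have bounded: "\<forall>a\<in>A'. a \<le> w" if "\<forall>a\<in>A. a \<le> w" for w
    using that unfolding A'_def by (force intro: Sup_fin.boundedI)
  have "up_directed A'"
    unfolding up_directed_def
  proof (intro conjI ballI)
    show "A' \<noteq> {}"
      using assms(3) singleton by blast
  next
    fix x y assume "x \<in> A'" "y \<in> A'"
    then obtain F G where "x = Sup_fin F" "y = Sup_fin G" "finite F" "finite G"
      "F \<noteq> {}" "G \<noteq> {}" "F \<subseteq> A" "G \<subseteq> A"
      unfolding A'_def by blast
    then show "\<exists>c\<in>A'. x \<le> c \<and> y \<le> c"
      unfolding A'_def by (intro bexI[of _ "Sup_fin (F \<union> G)"]) (auto intro: Sup_fin.subset_imp)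
  qed
  then obtain s where s: "is_lub A' s"
    using up_directed_ex_is_lub_if_tails_small[OF bl] up_directed_tails_small[OF bl oc _ bounded[OF assms(4)]]
    by blast
  then have "is_lub A s"
    using singleton bounded unfolding is_lub_def by blast
  then show ?thesis ..
qed

section \<open>Order continuity of convex monotone operators\<close>

lemma directed_is_lub_norm_approx:
  assumes oc: "order_continuous_norm TYPE('a::{banach, ordered_real_vector, lattice})"
    and dir: "up_directed A" and s: "is_lub A (s::'a)" and "e > 0"
  shows "\<exists>a\<in>A. norm (s - a) < e"
proof -
  have "down_directed {s - a | a. a \<in> A}"
    unfolding down_directed_def
  proof (intro conjI ballI)
    show "{s - a | a. a \<in> A} \<noteq> {}"
      using dir by (auto simp: up_directed_def)
  next
    fix d1 d2 assume "d1 \<in> {s - a | a. a \<in> A}" "d2 \<in> {s - a | a. a \<in> A}"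
    then obtain a1 a2 where "d1 = s - a1" "d2 = s - a2" "a1 \<in> A" "a2 \<in> A"
      by blast
    moreover obtain a3 where "a3 \<in> A" "a1 \<le> a3" "a2 \<le> a3"
      using dir \<open>a1 \<in> A\<close> \<open>a2 \<in> A\<close> unfolding up_directed_def by blast
    ultimately show "\<exists>c\<in>{s - a | a. a \<in> A}. c \<le> d1 \<and> c \<le> d2"
      by (auto intro: diff_left_mono)
  qed
  moreover have "is_glb {s - a | a. a \<in> A} 0"
    unfolding is_glb_def
  proof (intro conjI allI impI ballI)
    fix d assume "d \<in> {s - a | a. a \<in> A}"
    then show "0 \<le> d"
      using s by (auto simp: is_lub_def)
  next
    fix w assume "\<forall>d\<in>{s - a | a. a \<in> A}. w \<le> d"
    then have "\<forall>a\<in>A. a \<le> s - w"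
      by (auto simp: le_diff_eq add.commute)
    then have "s \<le> s - w"
      using s by (simp add: is_lub_def)
    then show "w \<le> 0"
      by simp
  qed
  ultimately show ?thesis
    using oc assms(4) unfolding order_continuous_norm_def by blast
qed

lemma convex_op_increment_le:
  assumes "convex_op T" "0 < m" "m \<le> 1"
  shows "T s - T a \<le> m *\<^sub>R (T (a + (1 / m) *\<^sub>R (s - a)) - T a)"
proof -
  define z where "z = a + (1 / m) *\<^sub>R (s - a)"
  have "s = (1 - m) *\<^sub>R a + (1 - (1 - m)) *\<^sub>R z"
    using assms(2) by (simp add: z_def algebra_simps)
  then have "T s \<le> (1 - m) *\<^sub>R T a + (1 - (1 - m)) *\<^sub>R T z"
    using assms(1)[unfolded convex_op_def, rule_format, of "1 - m" a z] assms(2,3) by simp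
  then show ?thesis
    by (simp add: z_def algebra_simps)
qed

lemma convex_monotone_op_is_lub_image:
  assumes bl: "banach_lattice TYPE('a::{banach, ordered_real_vector, lattice})"
    and oc: "order_continuous_norm TYPE('a)"
    and cv: "convex_op T" and mo: "monotone_op T" and bd: "bounded_op (T::'a \<Rightarrow> 'a)"
    and dir: "up_directed A" and s: "is_lub A s"
  shows "is_lub (T ` A) (T s)"
  unfolding is_lub_def
proof (intro conjI ballI allI impI)
  fix y assume "y \<in> T ` A"
  then show "y \<le> T s"
    using s mo by (auto simp: is_lub_def monotone_op_def)
next
  fix u assume u: "\<forall>y\<in>T ` A. y \<le> u"
  have "norm s + 2 > 0"
    by (simp add: add_nonneg_pos)
  then obtain C where C: "\<And>w. norm w \<le> norm s + 2 \<Longrightarrow> norm (T w) \<le> C"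
    using bd unfolding bounded_op_def by blast
  define N where "N = norm (sup (T s - u) 0)"
  have bound: "N \<le> 2 * C * m" if m: "m \<in> {0<..<1}" for m
  proof -
    obtain a where a: "a \<in> A" "norm (s - a) < m"
      using directed_is_lub_norm_approx[OF oc dir s] m by auto
    define z where "z = a + (1 / m) *\<^sub>R (s - a)"
    have "norm ((1 / m) *\<^sub>R (s - a)) \<le> 1"
      using a m by (simp add: divide_simps)
    moreover have "norm a \<le> norm s + 1"
      using a m norm_triangle_ineq2[of a s] by (simp add: norm_minus_commute)
    ultimately have norms: "norm a \<le> norm s + 2" "norm z \<le> norm s + 2"
      using norm_triangle_ineq[of a "(1 / m) *\<^sub>R (s - a)"] unfolding z_def by linarith+
    have incr: "T s - T a \<le> m *\<^sub>R (T z - T a)"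
      unfolding z_def using convex_op_increment_le[OF cv] m by simp
    have "T a \<le> T s"
      using mo s a unfolding monotone_op_def is_lub_def by blast
    then have nonneg: "0 \<le> m *\<^sub>R (T z - T a)"
      using incr by (meson diff_ge_0_iff_ge order_trans)
    have "T s - u \<le> T s - T a"
      using u a by (simp add: diff_left_mono)
    then have "T s - u \<le> m *\<^sub>R (T z - T a)"
      using incr by (rule order_trans)
    then have "sup (T s - u) 0 \<le> m *\<^sub>R (T z - T a)"
      using nonneg by simp
    then have "N \<le> norm (m *\<^sub>R (T z - T a))"
      unfolding N_def by (intro norm_mono_nonneg[OF bl]) auto
    also have "\<dots> = m * norm (T z - T a)"
      using m by simp
    also have "\<dots> \<le> m * (C + C)"
      using C[OF norms(1)] C[OF norms(2)] norm_triangle_ineq4[of "T z" "T a"] m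
      by (intro mult_left_mono) auto
    finally show ?thesis
      by (simp add: algebra_simps)
  qed
  have "N \<le> 0"
  proof (rule tendsto_le[OF trivial_limit_at_right_real])
    show "((\<lambda>m. 2 * C * m) \<longlongrightarrow> 0) (at_right 0)"
      by (intro tendsto_eq_intros) auto
    show "eventually (\<lambda>m. N \<le> 2 * C * m) (at_right 0)"
      by (rule eventually_mono[OF eventually_at_right_real[OF zero_less_one] bound])
  qed simp
  then have "sup (T s - u) 0 = 0"
    unfolding N_def by simp
  then show "T s \<le> u"
    by (metis sup.cobounded1 diff_le_0_iff_le)
qed

section \<open>Partitions and the operators J\<close>

lemma sorted_list_of_set_set: "sorted_wrt (<) xs \<Longrightarrow> sorted_list_of_set (set xs) = xs"
  by (simp add: strict_sorted_iff sorted_list_of_set.idem_if_sorted_distinct)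

lemma sorted_list_of_set_Un:
  assumes "finite A" "finite B" "\<forall>a\<in>A. \<forall>b\<in>B. a < b"
  shows "sorted_list_of_set (A \<union> B) = sorted_list_of_set A @ sorted_list_of_set B"
proof -
  have "sorted_wrt (<) (sorted_list_of_set A @ sorted_list_of_set B)"
    using assms by (simp add: sorted_wrt_append)
  then show ?thesis
    using sorted_list_of_set_set assms by fastforce
qed

lemma partitions_iff:
  "p \<in> partitions t \<longleftrightarrow> finite p \<and> p \<subseteq> {0..t} \<and> 0 \<in> p \<and> t \<in> p"
proof
  assume "p \<in> partitions t"
  then show "finite p \<and> p \<subseteq> {0..t} \<and> 0 \<in> p \<and> t \<in> p"
    unfolding partitions_def by (auto intro: Max_in)
next
  assume "finite p \<and> p \<subseteq> {0..t} \<and> 0 \<in> p \<and> t \<in> p"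
  then show "p \<in> partitions t"
    unfolding partitions_def by (auto intro!: Max_eqI)
qed

lemma doubleton_in_partitions: "0 \<le> t \<Longrightarrow> {0, t} \<in> partitions t"
  by (simp add: partitions_iff)

lemma partitions_lower_part:
  "q \<in> partitions (t + s) \<Longrightarrow> t \<in> q \<Longrightarrow> 0 \<le> t \<Longrightarrow> {x\<in>q. x \<le> t} \<in> partitions t"
  by (auto simp: partitions_iff)

lemma partitions_upper_part:
  assumes "q \<in> partitions (t + s)" "t \<in> q"
  shows "(\<lambda>x. x - t) ` {x\<in>q. t \<le> x} \<in> partitions s"
proof -
  have "t + s \<in> {x\<in>q. t \<le> x}" "t \<in> {x\<in>q. t \<le> x}"
    using assms by (auto simp: partitions_iff)
  then have "(t + s) - t \<in> (\<lambda>x. x - t) ` {x\<in>q. t \<le> x}" "t - t \<in> (\<lambda>x. x - t) ` {x\<in>q. t \<le> x}"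
    by blast+
  then show ?thesis
    using assms by (auto simp: partitions_iff)
qed

lemma J_list_append:
  "J_list L Ss (us @ m # vs) = J_list L Ss (us @ [m]) \<circ> J_list L Ss (m # vs)"
  by (induction us rule: induct_list012) auto

lemma J_list_map_add: "J_list L Ss (map (\<lambda>x. x + c) xs) = J_list L Ss xs"
  by (induction xs rule: induct_list012) auto

lemma J_part_split:
  assumes "finite p" "m \<in> p"
  shows "J_part L Ss p = J_part L Ss {x\<in>p. x \<le> m} \<circ> J_part L Ss {x\<in>p. m \<le> x}"
proof -
  define lo where "lo = {x\<in>p. x < m}"
  define hi where "hi = {x\<in>p. m < x}"
  have fin: "finite lo" "finite hi"
    using assms(1) by (simp_all add: lo_def hi_def)
  have sets: "p = lo \<union> ({m} \<union> hi)" "{x\<in>p. x \<le> m} = lo \<union> {m}" "{x\<in>p. m \<le> x} = {m} \<union> hi"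
    using assms(2) by (auto simp: lo_def hi_def)
  have hi: "sorted_list_of_set ({m} \<union> hi) = m # sorted_list_of_set hi"
    by (subst sorted_list_of_set_Un) (use fin in \<open>auto simp: hi_def\<close>)
  have whole: "sorted_list_of_set p = sorted_list_of_set lo @ m # sorted_list_of_set hi"
    unfolding sets(1) hi[symmetric]
    by (rule sorted_list_of_set_Un) (use fin in \<open>auto simp: lo_def hi_def\<close>)
  have left: "sorted_list_of_set {x\<in>p. x \<le> m} = sorted_list_of_set lo @ [m]"
    unfolding sets(2) by (subst sorted_list_of_set_Un) (use fin in \<open>auto simp: lo_def\<close>)
  show ?thesis
    unfolding J_part_def whole left sets(3) hi by (rule J_list_append)
qed

lemma J_part_translate:
  assumes "finite p"
  shows "J_part L Ss ((\<lambda>x. x + c) ` p) = J_part L Ss p"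
proof -
  have "sorted_list_of_set ((\<lambda>x. x + c) ` p) = map (\<lambda>x. x + c) (sorted_list_of_set p)"
    using sorted_list_of_set_set[of "map (\<lambda>x. x + c) (sorted_list_of_set p)"] assms
    by (simp add: sorted_wrt_map)
  then show ?thesis
    by (simp add: J_part_def J_list_map_add)
qed

lemma J_part_doubleton: "a < b \<Longrightarrow> J_part L Ss {a, b} = J_step L Ss (b - a)"
  using sorted_list_of_set_set[of "[a, b]"] by (simp add: J_part_def)

lemma J_part_singleton: "J_part L Ss {a} = id"
  by (simp add: J_part_def)

lemma J_part_concat:
  assumes "p \<in> partitions t" "q \<in> partitions s"
  shows "J_part L Ss p (J_part L Ss q x) = J_part L Ss (p \<union> (\<lambda>y. y + t) ` q) x"
    and "p \<union> (\<lambda>y. y + t) ` q \<in> partitions (t + s)"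
proof -
  have p: "finite p" "p \<subseteq> {0..t}" "0 \<in> p" "t \<in> p" and q: "finite q" "q \<subseteq> {0..s}" "0 \<in> q" "s \<in> q"
    using assms by (simp_all add: partitions_iff)
  have "{y \<in> p \<union> (\<lambda>y. y + t) ` q. y \<le> t} = p" "{y \<in> p \<union> (\<lambda>y. y + t) ` q. t \<le> y} = (\<lambda>y. y + t) ` q"
    using p q by (auto simp: subset_eq intro: antisym)
  then show "J_part L Ss p (J_part L Ss q x) = J_part L Ss (p \<union> (\<lambda>y. y + t) ` q) x"
    using J_part_split[of "p \<union> (\<lambda>y. y + t) ` q" t L Ss] J_part_translate[OF q(1), of L Ss t] p q by simp
  show "p \<union> (\<lambda>y. y + t) ` q \<in> partitions (t + s)"
    using p q by (force simp: partitions_iff)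
qed

section \<open>The envelope as supremum over partitions\<close>

locale convex_monotone_envelope =
  fixes L :: "'l set" and Ss :: "'l \<Rightarrow> real \<Rightarrow> 'a::{banach, ordered_real_vector, lattice} \<Rightarrow> 'a"
    and S :: "real \<Rightarrow> 'a \<Rightarrow> 'a"
  assumes banach_lattice: "banach_lattice TYPE('a)"
    and order_continuous: "order_continuous_norm TYPE('a)"
    and convex_monotone: "\<forall>l\<in>L. convex_monotone_semigroup (Ss l)"
    and envelope: "semigroup_envelope L Ss S"
    and nonempty: "L \<noteq> {}"
begin

abbreviation J :: "real \<Rightarrow> 'a \<Rightarrow> 'a" where "J \<equiv> J_step L Ss"

lemma S_semigroup: "semigroup S"
  using envelope by (simp add: semigroup_envelope_def upper_bound_sg_def)

lemma S_add: "0 \<le> t \<Longrightarrow> 0 \<le> s \<Longrightarrow> S (t + s) y = S t (S s y)"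
  using S_semigroup by (simp add: semigroup_def)

lemma S_0: "S 0 y = y"
  using S_semigroup by (simp add: semigroup_def)

lemma Ss_le_S: "l \<in> L \<Longrightarrow> 0 \<le> h \<Longrightarrow> Ss l h y \<le> S h y"
  using envelope by (simp add: semigroup_envelope_def upper_bound_sg_def sg_le_def)

lemma Ss_semigroup: "l \<in> L \<Longrightarrow> semigroup (Ss l)"
  using convex_monotone by (simp add: convex_monotone_semigroup_def)

lemma Ss_add: "l \<in> L \<Longrightarrow> 0 \<le> t \<Longrightarrow> 0 \<le> s \<Longrightarrow> Ss l (t + s) y = Ss l t (Ss l s y)"
  using Ss_semigroup by (simp add: semigroup_def)

lemma Ss_0: "l \<in> L \<Longrightarrow> Ss l 0 y = y"
  using Ss_semigroup by (simp add: semigroup_def)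

lemma Ss_op: "l \<in> L \<Longrightarrow> 0 \<le> h \<Longrightarrow> convex_op (Ss l h) \<and> monotone_op (Ss l h) \<and> bounded_op (Ss l h)"
  using convex_monotone by (simp add: convex_monotone_semigroup_def semigroup_def)

lemma Ss_mono: "l \<in> L \<Longrightarrow> 0 \<le> h \<Longrightarrow> y \<le> y' \<Longrightarrow> Ss l h y \<le> Ss l h y'"
  using Ss_op by (simp add: monotone_op_def)

lemma J_is_lub: "0 < h \<Longrightarrow> is_lub {Ss l h y | l. l \<in> L} (J h y)"
  using ex_is_lub[OF banach_lattice order_continuous, of "{Ss l h y | l. l \<in> L}" "S h y"]
    nonempty Ss_le_S lub_eqI by (fastforce simp: J_step_def)

lemma J_ge: "0 < h \<Longrightarrow> l \<in> L \<Longrightarrow> Ss l h y \<le> J h y"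
  using J_is_lub unfolding is_lub_def by blast

lemma J_least: "0 < h \<Longrightarrow> (\<And>l. l \<in> L \<Longrightarrow> Ss l h y \<le> u) \<Longrightarrow> J h y \<le> u"
  using J_is_lub[of h y] unfolding is_lub_def by blast

lemma J_le_S:
  assumes "0 \<le> h"
  shows "J h y \<le> S h y"
proof (cases "h = 0")
  case False
  with assms have "0 < h"
    by simp
  then show ?thesis
    by (rule J_least) (use assms Ss_le_S in blast)
qed (simp add: J_step_def S_0)

lemma J_mono:
  assumes "0 \<le> h" "y \<le> y'"
  shows "J h y \<le> J h y'"
proof (cases "h = 0")
  case False
  with assms have "0 < h"
    by simp
  then show ?thesis
  proof (rule J_least)
    fix l assume "l \<in> L"
    then have "Ss l h y \<le> Ss l h y'"
      using assms by (intro Ss_mono)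
    also have "\<dots> \<le> J h y'"
      using \<open>0 < h\<close> \<open>l \<in> L\<close> by (rule J_ge)
    finally show "Ss l h y \<le> J h y'" .
  qed
qed (simp add: J_step_def assms)

lemma J_add_le: "0 < a \<Longrightarrow> 0 < b \<Longrightarrow> J (a + b) y \<le> J a (J b y)"
proof (rule J_least)
  fix l assume "0 < a" "0 < b" "l \<in> L"
  then have "Ss l (a + b) y = Ss l a (Ss l b y)"
    by (simp add: Ss_add)
  also have "\<dots> \<le> Ss l a (J b y)"
    using \<open>0 < a\<close> \<open>0 < b\<close> \<open>l \<in> L\<close> by (simp add: Ss_mono J_ge)
  also have "\<dots> \<le> J a (J b y)"
    using \<open>0 < a\<close> \<open>l \<in> L\<close> by (rule J_ge)
  finally show "Ss l (a + b) y \<le> J a (J b y)" .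
qed simp

lemma J_is_lub_image:
  assumes "0 \<le> h" "up_directed A" "is_lub A s"
  shows "is_lub (J h ` A) (J h s)"
proof (cases "h = 0")
  case True
  then show ?thesis
    using assms(3) by (simp add: J_step_def)
next
  case False
  then have h: "0 < h"
    using assms(1) by simp
  show ?thesis
    unfolding is_lub_def
  proof (intro conjI ballI allI impI)
    fix z assume "z \<in> J h ` A"
    then show "z \<le> J h s"
      using assms J_mono by (auto simp: is_lub_def)
  next
    fix u assume u: "\<forall>z\<in>J h ` A. z \<le> u"
    show "J h s \<le> u"
    proof (rule J_least[OF h])
      fix l assume l: "l \<in> L"
      have "is_lub (Ss l h ` A) (Ss l h s)"
        using convex_monotone_op_is_lub_image[OF banach_lattice order_continuous _ _ _ assms(2,3)]
          Ss_op[OF l assms(1)] by blast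
      moreover have "\<forall>z\<in>Ss l h ` A. z \<le> u"
        using u J_ge[OF h l] by (auto intro: order_trans)
      ultimately show "Ss l h s \<le> u"
        by (simp add: is_lub_def)
    qed
  qed
qed

lemma J_list_mono: "sorted_wrt (<) xs \<Longrightarrow> y \<le> y' \<Longrightarrow> J_list L Ss xs y \<le> J_list L Ss xs y'"
proof (induction xs arbitrary: y y' rule: induct_list012)
  case (3 a b r)
  then show ?case
    by (simp add: J_mono)
qed simp_all

lemma J_list_is_lub_image:
  "sorted_wrt (<) xs \<Longrightarrow> up_directed A \<Longrightarrow> is_lub A s \<Longrightarrow>
    is_lub (J_list L Ss xs ` A) (J_list L Ss xs s)"
proof (induction xs arbitrary: A s rule: induct_list012)
  case (3 a b r)
  have "is_lub (J_list L Ss (b # r) ` A) (J_list L Ss (b # r) s)"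
    using 3 by simp
  moreover have "up_directed (J_list L Ss (b # r) ` A)"
    using "3.prems" by (intro up_directed_image J_list_mono) auto
  ultimately have "is_lub (J (b - a) ` J_list L Ss (b # r) ` A) (J (b - a) (J_list L Ss (b # r) s))"
    using "3.prems"(1) by (intro J_is_lub_image) auto
  then show ?case
    by (simp add: image_comp)
qed simp_all

lemma J_list_le_S:
  "sorted_wrt (<) (a # xs) \<Longrightarrow> set xs \<subseteq> {..b} \<Longrightarrow> b \<in> set (a # xs) \<Longrightarrow>
    J_list L Ss (a # xs) y \<le> S (b - a) y"
proof (induction xs arbitrary: a y)
  case Nil
  then show ?case
    by (simp add: S_0)
next
  case (Cons c r)
  have sorted: "sorted_wrt (<) (c # r)" and "a < c"
    using Cons.prems(1) by auto
  have "c \<le> b" "set r \<subseteq> {..b}"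
    using Cons.prems(2) by auto
  have "b \<in> set (c # r)"
    using Cons.prems(3) \<open>a < c\<close> \<open>c \<le> b\<close> by auto
  have "J_list L Ss (a # c # r) y = J (c - a) (J_list L Ss (c # r) y)"
    by simp
  also have "\<dots> \<le> J (c - a) (S (b - c) y)"
    using Cons.IH[OF sorted \<open>set r \<subseteq> {..b}\<close> \<open>b \<in> set (c # r)\<close>] \<open>a < c\<close>
    by (intro J_mono) simp_all
  also have "\<dots> \<le> S (c - a) (S (b - c) y)"
    using \<open>a < c\<close> by (intro J_le_S) simp
  also have "\<dots> = S (b - a) y"
    using S_add[of "c - a" "b - c" y] \<open>a < c\<close> \<open>c \<le> b\<close> by simp
  finally show ?case .
qed

lemma J_list_insert_le:
  assumes "sorted_wrt (<) (us @ a # r # b # vs)"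
  shows "J_list L Ss (us @ a # b # vs) y \<le> J_list L Ss (us @ a # r # b # vs) y"
proof -
  have "sorted_wrt (<) (a # r # b # vs)" "sorted_wrt (<) (us @ [a])"
    using assms by (simp_all add: sorted_wrt_append)
  then have "a < r" "r < b"
    by simp_all
  have "J_list L Ss (a # b # vs) y = J ((r - a) + (b - r)) (J_list L Ss (b # vs) y)"
    by simp
  also have "\<dots> \<le> J (r - a) (J (b - r) (J_list L Ss (b # vs) y))"
    using \<open>a < r\<close> \<open>r < b\<close> by (intro J_add_le) auto
  also have "\<dots> = J_list L Ss (a # r # b # vs) y"
    by simp
  finally have "J_list L Ss (us @ [a]) (J_list L Ss (a # b # vs) y)
      \<le> J_list L Ss (us @ [a]) (J_list L Ss (a # r # b # vs) y)"
    by (rule J_list_mono[OF \<open>sorted_wrt (<) (us @ [a])\<close>])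
  then show ?thesis
    by (simp only: J_list_append[of L Ss us a "b # vs"] J_list_append[of L Ss us a "r # b # vs"]
        comp_apply)
qed

lemma J_part_mono: "finite p \<Longrightarrow> y \<le> y' \<Longrightarrow> J_part L Ss p y \<le> J_part L Ss p y'"
  unfolding J_part_def by (simp add: J_list_mono)

lemma J_part_is_lub_image:
  "finite p \<Longrightarrow> up_directed A \<Longrightarrow> is_lub A s \<Longrightarrow> is_lub (J_part L Ss p ` A) (J_part L Ss p s)"
  unfolding J_part_def by (simp add: J_list_is_lub_image)

lemma J_part_le_S:
  assumes "p \<in> partitions t"
  shows "J_part L Ss p y \<le> S t y"
proof -
  have p: "finite p" "p \<subseteq> {0..t}" "0 \<in> p" "t \<in> p"
    using assms by (simp_all add: partitions_iff)
  then have "Min p = 0"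
    by (intro Min_eqI) (auto simp: subset_eq)
  then have "sorted_list_of_set p = 0 # sorted_list_of_set (p - {0})"
    using sorted_list_of_set_nonempty[of p] p by auto
  moreover have "J_list L Ss (0 # sorted_list_of_set (p - {0})) y \<le> S (t - 0) y"
    by (rule J_list_le_S) (use p in auto)
  ultimately show ?thesis
    unfolding J_part_def by simp
qed

lemma J_part_insert_le:
  assumes "finite p" "a \<in> p" "b \<in> p" "a < r" "r < b"
  shows "J_part L Ss p y \<le> J_part L Ss (insert r p) y"
proof (cases "r \<in> p")
  case False
  define lo where "lo = {x\<in>p. x < r}"
  define hi where "hi = {x\<in>p. r < x}"
  have fin: "finite lo" "finite hi"
    using assms(1) by (simp_all add: lo_def hi_def)
  have sets: "p = lo \<union> hi" "insert r p = lo \<union> ({r} \<union> hi)"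
    using False by (auto simp: lo_def hi_def) (metis linorder_neqE_linordered_idom)
  have r_hi: "sorted_list_of_set ({r} \<union> hi) = r # sorted_list_of_set hi"
    by (subst sorted_list_of_set_Un) (use fin in \<open>auto simp: hi_def\<close>)
  have lists: "sorted_list_of_set p = sorted_list_of_set lo @ sorted_list_of_set hi"
    "sorted_list_of_set (insert r p) = sorted_list_of_set lo @ r # sorted_list_of_set hi"
    unfolding sets(2) r_hi[symmetric] unfolding sets(1)
    by (rule sorted_list_of_set_Un; use fin in \<open>auto simp: lo_def hi_def\<close>)+
  obtain us a' where us: "sorted_list_of_set lo = us @ [a']"
    using assms(2,4) fin by (cases "sorted_list_of_set lo" rule: rev_exhaust) (auto simp: lo_def)
  obtain b' vs where vs: "sorted_list_of_set hi = b' # vs"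
    using assms(3,5) fin by (cases "sorted_list_of_set hi") (auto simp: hi_def)
  have "sorted_wrt (<) (us @ a' # r # b' # vs)"
    using strict_sorted_list_of_set[of "insert r p"] lists(2) us vs by simp
  then show ?thesis
    using J_list_insert_le lists us vs by (simp add: J_part_def)
qed (simp add: insert_absorb)

lemma J_part_refine:
  assumes "p \<in> partitions t" "q \<in> partitions t" "p \<subseteq> q"
  shows "J_part L Ss p y \<le> J_part L Ss q y"
proof -
  have p: "finite p" "0 \<in> p" "t \<in> p" and q: "finite q" "q \<subseteq> {0..t}"
    using assms(1,2) by (simp_all add: partitions_iff)
  have "J_part L Ss p y \<le> J_part L Ss (p \<union> F) y" if "finite F" "F \<subseteq> q - p" for F
    using that
  proof (induction F rule: finite_induct)
    case (insert r F)
    then have "0 < r" "r < t"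
      using p q(2) by (fastforce simp: order_less_le)+
    then have "J_part L Ss (p \<union> F) y \<le> J_part L Ss (insert r (p \<union> F)) y"
      using p insert by (intro J_part_insert_le[of _ 0 t]) auto
    then show ?case
      using insert by (auto intro: order_trans)
  qed simp
  from this[of "q - p"] show ?thesis
    using assms(3) q(1) by (simp add: Un_absorb1)
qed

definition Jsup :: "real \<Rightarrow> 'a \<Rightarrow> 'a" where
  "Jsup t x = lub {J_part L Ss p x | p. p \<in> partitions t}"

lemma Jsup_is_lub: "0 \<le> t \<Longrightarrow> is_lub {J_part L Ss p x | p. p \<in> partitions t} (Jsup t x)"
  using ex_is_lub[OF banach_lattice order_continuous, of "{J_part L Ss p x | p. p \<in> partitions t}" "S t x"]
    doubleton_in_partitions J_part_le_S lub_eqI unfolding Jsup_def by blast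

lemma Jsup_upper: "0 \<le> t \<Longrightarrow> p \<in> partitions t \<Longrightarrow> J_part L Ss p x \<le> Jsup t x"
  using Jsup_is_lub unfolding is_lub_def by blast

lemma Jsup_least: "0 \<le> t \<Longrightarrow> (\<And>p. p \<in> partitions t \<Longrightarrow> J_part L Ss p x \<le> u) \<Longrightarrow> Jsup t x \<le> u"
  using Jsup_is_lub[of t x] unfolding is_lub_def by blast

lemma Jsup_le_S: "0 \<le> t \<Longrightarrow> Jsup t x \<le> S t x"
  using J_part_le_S by (blast intro: Jsup_least)

lemma up_directed_J_part_partitions: "0 \<le> t \<Longrightarrow> up_directed {J_part L Ss p x | p. p \<in> partitions t}"
  unfolding up_directed_def
proof (intro conjI ballI)
  fix y z assume "y \<in> {J_part L Ss p x | p. p \<in> partitions t}" "z \<in> {J_part L Ss p x | p. p \<in> partitions t}"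
  then obtain p q where "p \<in> partitions t" "q \<in> partitions t" "y = J_part L Ss p x" "z = J_part L Ss q x"
    by blast
  moreover have "p \<union> q \<in> partitions t"
    using calculation by (simp add: partitions_iff)
  ultimately show "\<exists>w\<in>{J_part L Ss p x | p. p \<in> partitions t}. y \<le> w \<and> z \<le> w"
    using J_part_refine by blast
qed (use doubleton_in_partitions in blast)

lemma Jsup_0: "Jsup 0 x = x"
proof -
  have "partitions 0 = {{0}}"
    by (auto simp: partitions_iff)
  then show ?thesis
    unfolding Jsup_def by (simp add: J_part_singleton lub_eqI is_lub_def)
qed

lemma Ss_le_Jsup: "l \<in> L \<Longrightarrow> 0 \<le> t \<Longrightarrow> Ss l t x \<le> Jsup t x"
proof (cases "t = 0")
  case False
  assume "l \<in> L" "0 \<le> t"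
  with False have "0 < t"
    by simp
  then have "Ss l t x \<le> J_part L Ss {0, t} x"
    using \<open>l \<in> L\<close> by (simp add: J_part_doubleton J_ge)
  also have "\<dots> \<le> Jsup t x"
    using \<open>0 \<le> t\<close> by (intro Jsup_upper doubleton_in_partitions)
  finally show ?thesis .
qed (simp add: Jsup_0 Ss_0)

lemma Jsup_bounded: "0 \<le> t \<Longrightarrow> bounded_op (Jsup t)"
  unfolding bounded_op_def
proof (intro allI impI)
  fix r :: real assume "0 \<le> t" "r > 0"
  obtain l where l: "l \<in> L"
    using nonempty by blast
  obtain C1 where C1: "\<And>x. norm x \<le> r \<Longrightarrow> norm (Ss l t x) \<le> C1"
    using Ss_op[OF l \<open>0 \<le> t\<close>] \<open>r > 0\<close> unfolding bounded_op_def by blast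
  obtain C2 where C2: "\<And>x. norm x \<le> r \<Longrightarrow> norm (S t x) \<le> C2"
    using S_semigroup \<open>0 \<le> t\<close> \<open>r > 0\<close> unfolding semigroup_def bounded_op_def by blast
  have "norm (Jsup t x) \<le> C1 + C2" if "norm x \<le> r" for x
    using norm_le_norm_add_if_between[OF banach_lattice Ss_le_Jsup[OF l \<open>0 \<le> t\<close>, of x]
        Jsup_le_S[OF \<open>0 \<le> t\<close>, of x]]
      C1[OF that] C2[OF that] by linarith
  then show "\<exists>C. \<forall>x. norm x \<le> r \<longrightarrow> norm (Jsup t x) \<le> C"
    by blast
qed

lemma Jsup_add_le: "0 \<le> t \<Longrightarrow> 0 \<le> s \<Longrightarrow> Jsup (t + s) x \<le> Jsup t (Jsup s x)"
proof (rule Jsup_least)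
  fix p assume "0 \<le> t" "0 \<le> s" "p \<in> partitions (t + s)"
  define q where "q = insert t p"
  have q: "q \<in> partitions (t + s)" "t \<in> q" "finite q"
    using \<open>p \<in> partitions (t + s)\<close> \<open>0 \<le> t\<close> \<open>0 \<le> s\<close> by (auto simp: q_def partitions_iff)
  have "J_part L Ss p x \<le> J_part L Ss q x"
    using \<open>p \<in> partitions (t + s)\<close> q by (intro J_part_refine) (auto simp: q_def)
  also have "\<dots> = J_part L Ss {y\<in>q. y \<le> t} (J_part L Ss ((\<lambda>y. y - t) ` {y\<in>q. t \<le> y}) x)"
    using J_part_translate[of "{y\<in>q. t \<le> y}" L Ss "- t"] q(3)
    by (simp add: J_part_split[OF q(3,2), of L Ss])
  also have "\<dots> \<le> J_part L Ss {y\<in>q. y \<le> t} (Jsup s x)"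
    using q \<open>0 \<le> s\<close> by (intro J_part_mono Jsup_upper partitions_upper_part) auto
  also have "\<dots> \<le> Jsup t (Jsup s x)"
    using q \<open>0 \<le> t\<close> by (intro Jsup_upper partitions_lower_part)
  finally show "J_part L Ss p x \<le> Jsup t (Jsup s x)" .
qed simp

lemma Jsup_add_ge: "0 \<le> t \<Longrightarrow> 0 \<le> s \<Longrightarrow> Jsup t (Jsup s x) \<le> Jsup (t + s) x"
proof (rule Jsup_least)
  fix p assume "0 \<le> t" "0 \<le> s" "p \<in> partitions t"
  let ?A = "{J_part L Ss q x | q. q \<in> partitions s}"
  have lub: "is_lub (J_part L Ss p ` ?A) (J_part L Ss p (Jsup s x))"
    using \<open>p \<in> partitions t\<close> \<open>0 \<le> s\<close>
    by (intro J_part_is_lub_image up_directed_J_part_partitions Jsup_is_lub) (auto simp: partitions_iff)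
  have "J_part L Ss p (J_part L Ss q x) \<le> Jsup (t + s) x" if "q \<in> partitions s" for q
    using J_part_concat(1)[OF \<open>p \<in> partitions t\<close> that, of L Ss x]
      J_part_concat(2)[OF \<open>p \<in> partitions t\<close> that] \<open>0 \<le> t\<close> \<open>0 \<le> s\<close>
    by (simp add: Jsup_upper)
  then have "\<forall>z\<in>J_part L Ss p ` ?A. z \<le> Jsup (t + s) x"
    by blast
  with lub show "J_part L Ss p (Jsup s x) \<le> Jsup (t + s) x"
    by (simp add: is_lub_def)
qed

lemma Jsup_semigroup: "semigroup Jsup"
  unfolding semigroup_def
  using Jsup_bounded Jsup_0 Jsup_add_le Jsup_add_ge by (auto simp: fun_eq_iff intro: antisym)

lemma S_eq_Jsup: "0 \<le> t \<Longrightarrow> S t x = Jsup t x"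
proof -
  assume "0 \<le> t"
  have "upper_bound_sg L Ss Jsup"
    unfolding upper_bound_sg_def sg_le_def using Jsup_semigroup Ss_le_Jsup by blast
  then have "S t x \<le> Jsup t x"
    using envelope \<open>0 \<le> t\<close> by (simp add: semigroup_envelope_def sg_le_def)
  then show ?thesis
    using Jsup_le_S[OF \<open>0 \<le> t\<close>] by (rule antisym)
qed

end

lemma translation_semigroup: "semigroup (\<lambda>t x. x - t *\<^sub>R c)"
  unfolding semigroup_def bounded_op_def
proof (intro conjI allI impI)
  fix t r :: real
  have "norm (x - t *\<^sub>R c) \<le> r + norm (t *\<^sub>R c)" if "norm x \<le> r" for x
    using norm_triangle_ineq4[of x "t *\<^sub>R c"] that by linarith
  then show "\<exists>C. \<forall>x. norm x \<le> r \<longrightarrow> norm (x - t *\<^sub>R c) \<le> C"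
    by blast
qed (auto simp: fun_eq_iff algebra_simps)

text \<open>The envelope of the empty family lies below every translation semigroup
  \<open>x \<mapsto> x - t c\<close>, which is only possible in the zero space.\<close>

lemma semigroup_envelope_empty_trivial:
  fixes Ss :: "'l \<Rightarrow> real \<Rightarrow> 'a::{banach, ordered_real_vector, lattice} \<Rightarrow> 'a"
  assumes bl: "banach_lattice TYPE('a)" and "semigroup_envelope {} Ss S"
  shows "(y::'a) = 0"
proof -
  have "upper_bound_sg {} Ss (\<lambda>t x. x - t *\<^sub>R c)" for c
    by (simp add: upper_bound_sg_def translation_semigroup)
  then have "sg_le S (\<lambda>t x. x - t *\<^sub>R c)" for c
    using assms(2) unfolding semigroup_envelope_def by blast
  then have "S 1 0 \<le> 0 - 1 *\<^sub>R c" for c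
    unfolding sg_le_def by (meson zero_le_one)
  then have "S 1 0 \<le> - c" for c
    by simp
  then have "real n *\<^sub>R lat_abs y \<le> - S 1 0" for n
    using le_minus_iff by blast
  then have "lat_abs y = 0"
    using archimedean_lattice[OF bl lat_abs_nonneg] by blast
  then show ?thesis
    using norm_lat_abs[OF bl, of y] by simp
qed

theorem corollary4p5:
  fixes L :: "'l set"
    and Ss :: "'l \<Rightarrow> real \<Rightarrow> 'a::{banach, ordered_real_vector, lattice} \<Rightarrow> 'a"
    and S :: "real \<Rightarrow> 'a \<Rightarrow> 'a"
  assumes "banach_lattice TYPE('a)"
    and "order_continuous_norm TYPE('a)"
    and "\<forall>l\<in>L. convex_monotone_semigroup (Ss l)"
    and "semigroup_envelope L Ss S"
  shows "\<forall>t\<ge>0. \<forall>x. is_lub {J_part L Ss p x | p. p \<in> partitions t} (S t x)"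
proof (intro allI impI)
  fix t :: real and x :: 'a
  assume "0 \<le> t"
  show "is_lub {J_part L Ss p x | p. p \<in> partitions t} (S t x)"
  proof (cases "L = {}")
    case True
    then have "y = 0" for y :: 'a
      using semigroup_envelope_empty_trivial assms(1,4) by blast
    then have "y \<le> z" for y z :: 'a
      by (simp only: \<open>y = 0\<close> \<open>z = 0\<close> order_refl)
    then show ?thesis
      unfolding is_lub_def by blast
  next
    case False
    then interpret convex_monotone_envelope L Ss S
      using assms by unfold_locales
    show ?thesis
      using Jsup_is_lub S_eq_Jsup \<open>0 \<le> t\<close> by simp
  qed
qed

end
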